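(* Let $\mathcal{I}$ be a $\sigma$-ideal on $\mathbb{R}$ satisfying the standing assumptions. Let $B\subseteq\mathbb{R}$ be a Borel set with $B\notin\mathcal{I}$ and let $D\subseteq\mathbb{R}$ be a countable dense set. Then $B+D=\{b+d: b\in B, d\in D\}$ is $\mathcal{I}$-residual, i.e. $\mathbb{R}\setminus(B+D)\in\mathcal{I}$.
   Context: Standing assumptions on $\mathcal{I}$: $\mathcal{I}$ is a $\sigma$-ideal of subsets of $\mathbb{R}$ (closed under subsets and countable unions) such that: $\mathbb{R}\notin\mathcal{I}$; $x+I\in\mathcal{I}$ and $xI=\{xi:i\in I\}\in\mathcal{I}$ for all $x\in\mathbb{R}$, $I\in\mathcal{I}$; every $I\in\mathcal{I}$ is contained in a Borel set belonging to $\mathcal{I}$; and (Steinhaus property) for all Borel sets $A,B\notin\mathcal{I}$ the set $A-B=\{a-b:a\in A,b\in B\}$ has nonempty interior. A set is $\mathcal{I}$-residual if its complement belongs to $\mathcal{I}$. *)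

theory Defs
  imports "HOL-Analysis.Analysis"
begin

definition admissible_ideal :: "real set set \<Rightarrow> bool" where
  "admissible_ideal I \<longleftrightarrow>
     (\<forall>A B. B \<in> I \<longrightarrow> A \<subseteq> B \<longrightarrow> A \<in> I) \<and>
     (\<forall>F :: nat \<Rightarrow> real set. (\<forall>n. F n \<in> I) \<longrightarrow> (\<Union>n. F n) \<in> I) \<and>
     (UNIV :: real set) \<notin> I \<and>
     (\<forall>x A. A \<in> I \<longrightarrow> (\<lambda>a. x + a) ` A \<in> I) \<and>
     (\<forall>x A. A \<in> I \<longrightarrow> (\<lambda>a. x * a) ` A \<in> I) \<and>
     (\<forall>A \<in> I. \<exists>B \<in> sets borel. A \<subseteq> B \<and> B \<in> I) \<and>
     (\<forall>A B. A \<in> sets borel \<longrightarrow> B \<in> sets borel \<longrightarrow> A \<notin> I \<longrightarrow> B \<notin> I \<longrightarrow>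
        interior {a - b | a b. a \<in> A \<and> b \<in> B} \<noteq> {})"

end

theory Submission
  imports Defs
begin

text \<open>
  Let S = B + D.  Since D is countable, S is a countable union of
  translates of B, hence Borel, and so is its complement C.  If C were not in
  the ideal, the Steinhaus property would give the difference set C - B a
  nonempty interior; a dense set D meets every such set, so some d \<in> D equals
  c - b with c \<in> C, b \<in> B.  But then c = b + d \<in> S, a contradiction.
\<close>

lemma borel_sum_countable:
  fixes B D :: "'a :: real_normed_vector set"
  assumes "B \<in> sets borel" and "countable D"
  shows "{b + d | b d. b \<in> B \<and> d \<in> D} \<in> sets borel"
proof -
  have translates: "{b + d | b d. b \<in> B \<and> d \<in> D} = (\<Union>d\<in>D. (\<lambda>x. x - d) -` B)"
    by force
  have "(\<lambda>x. x - d) -` B \<in> sets borel" for d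
  proof -
    have "(\<lambda>x::'a. x - d) \<in> borel_measurable borel"
      by (intro borel_measurable_continuous_onI continuous_intros)
    from measurable_sets[OF this assms(1)] show ?thesis by simp
  qed
  then show ?thesis
    unfolding translates using assms(2) by (intro sets.countable_UN'') auto
qed

lemma dense_meets_nonempty_interior:
  fixes D S :: "'a :: topological_space set"
  assumes "closure D = UNIV" and "interior S \<noteq> {}"
  shows "S \<inter> D \<noteq> {}"
proof -
  have "interior S \<inter> D \<noteq> {}"
    using open_Int_closure_eq_empty[of "interior S" D] assms by auto
  then show ?thesis using interior_subset by blast
qed

lemma admissible_ideal_steinhaus:
  assumes "admissible_ideal I"
    and "A \<in> sets borel" and "B \<in> sets borel" and "A \<notin> I" and "B \<notin> I"
  shows "interior {a - b | a b. a \<in> A \<and> b \<in> B} \<noteq> {}"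
  using assms unfolding admissible_ideal_def by blast

theorem mainTheorem1:
  fixes I :: "real set set" and B D :: "real set"
  assumes "admissible_ideal I"
    and "B \<in> sets borel" and "B \<notin> I"
    and "countable D" and "closure D = UNIV"
  shows "UNIV - {b + d | b d. b \<in> B \<and> d \<in> D} \<in> I"
proof (rule ccontr)
  let ?S = "{b + d | b d. b \<in> B \<and> d \<in> D}"
  assume C_not_small: "UNIV - ?S \<notin> I"
  have "UNIV - ?S \<in> sets borel"
    using borel_sum_countable[OF assms(2,4)] by auto
  then have "interior {c - b | c b. c \<in> UNIV - ?S \<and> b \<in> B} \<noteq> {}"
    using admissible_ideal_steinhaus[OF assms(1) _ assms(2) C_not_small assms(3)] by blast
  then obtain d where "d \<in> D" "d \<in> {c - b | c b. c \<in> UNIV - ?S \<and> b \<in> B}"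
    using dense_meets_nonempty_interior[OF assms(5)] by blast
  then obtain c b where "c \<notin> ?S" "b \<in> B" "c = b + d" by auto
  with \<open>d \<in> D\<close> show False by blast
qed

end
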